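(* Let $A=op\langle\{F_1=w_1,\dots,F_n=w_n\}\rangle\prec N$ be an aggregate in which $F_1,\dots,F_n$ are atoms, and suppose $A$ is monotone or antimonotone. Then $A_{tr}$ is strongly equivalent to $$\bigwedge_{I\subseteq\{1,\dots,n\}\,:\,op(\{w_i:i\in I\})\not\prec N}\Big(\big(\bigwedge_{i\in I}F_i\big)\to\big(\bigvee_{i\in\{1,\dots,n\}\setminus I}F_i\big)\Big).$$
   Context: Formulas with aggregates: atoms, $\bot$, combinations by $\wedge,\vee,\to$ ($\neg F:=F\to\bot$, $\top:=\bot\to\bot$; empty conjunction $\top$, empty disjunction $\bot$), and aggregates $op\langle\{F_1=w_1,\dots,F_n=w_n\}\rangle\prec N$ with $op$ a function from finite multisets of reals to $\mathbb R\cup\{\pm\infty\}$, $w_i,N$ reals, $\prec$ a binary relation on reals ($\not\prec$ its negation). Reduct: $\bot^X=\bot$; $a^X=a$ if $a\in X$, else $\bot$; $(F\otimes G)^X=F^X\otimes G^X$ if $X\models F\otimes G$, else $\bot$. $X$ is a stable model of a theory $\Gamma$ if $X\models\Gamma^X$ and no proper subset of $X$ satisfies $\Gamma^X$; two formulas are strongly equivalent if adding either to any theory gives the same stable models. The aggregate is monotone if for all sub-multisets $W_1\subseteq W_2\subseteq\{w_1,\dots,w_n\}$, $op(W_1)\prec N$ implies $op(W_2)\prec N$; antimonotone if for all $W_2\subseteq W_1\subseteq\{w_1,\dots,w_n\}$, $op(W_1)\prec N$ implies $op(W_2)\prec N$. Writing $W_I$ for the multiset $\{w_i:i\in I\}$,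 the Pelov–Denecker–Bruynooghe translation is $$A_{tr}=\bigvee_{\substack{I_1\subseteq I_2\subseteq\{1,\dots,n\}:\ op(W_I)\prec N\\ \text{for all } I \text{ with } I_1\subseteq I\subseteq I_2}}\Big(\bigwedge_{i\in I_1}F_i\wedge\bigwedge_{i\in\{1,\dots,n\}\setminus I_2}\neg F_i\Big).$$ *)

theory Defs
  imports Main "HOL-Library.Multiset" "HOL-Library.Extended_Real"
begin

text \<open>An aggregate
  op<{F_1 = w_1, ..., F_n = w_n}> prec N  is represented as
  Agg op [(F_1,w_1),...,(F_n,w_n)] prec N, where op maps finite multisets of
  reals to extended reals and prec is a binary relation (on extended reals,
  so that it can be applied to the values +-infinity of op; N is a real).\<close>

datatype 'a fm =
    Atom 'a
  | Bot
  | Conj "'a fm" "'a fm"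
  | Disj "'a fm" "'a fm"
  | Imp "'a fm" "'a fm"
  | Agg "real multiset \<Rightarrow> ereal" "('a fm \<times> real) list" "ereal \<Rightarrow> ereal \<Rightarrow> bool" real

definition Neg :: "'a fm \<Rightarrow> 'a fm" where "Neg F = Imp F Bot"
definition Top :: "'a fm" where "Top = Imp Bot Bot"

definition BigAnd :: "'a fm list \<Rightarrow> 'a fm" where "BigAnd Fs = foldr Conj Fs Top"
definition BigOr :: "'a fm list \<Rightarrow> 'a fm" where "BigOr Fs = foldr Disj Fs Bot"

fun sat :: "'a set \<Rightarrow> 'a fm \<Rightarrow> bool" where
  "sat X (Atom a) = (a \<in> X)"
| "sat X Bot = False"
| "sat X (Conj F G) = (sat X F \<and> sat X G)"
| "sat X (Disj F G) = (sat X F \<or> sat X G)"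
| "sat X (Imp F G) = (sat X F \<longrightarrow> sat X G)"
| "sat X (Agg op ps r N) =
     r (op (mset (map snd (filter (\<lambda>p. sat X (fst p)) ps)))) (ereal N)"

text \<open>Reduct (Ferraris): connectives and aggregates are replaced by Bot if
  not satisfied by X, otherwise the reduct is applied to the immediate
  subformulas.\<close>
fun reduct :: "'a set \<Rightarrow> 'a fm \<Rightarrow> 'a fm" where
  "reduct X (Atom a) = (if a \<in> X then Atom a else Bot)"
| "reduct X Bot = Bot"
| "reduct X (Conj F G) = (if sat X (Conj F G) then Conj (reduct X F) (reduct X G) else Bot)"
| "reduct X (Disj F G) = (if sat X (Disj F G) then Disj (reduct X F) (reduct X G) else Bot)"
| "reduct X (Imp F G) = (if sat X (Imp F G) then Imp (reduct X F) (reduct X G) else Bot)"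
| "reduct X (Agg op ps r N) =
     (if sat X (Agg op ps r N)
      then Agg op (map (\<lambda>p. (reduct X (fst p), snd p)) ps) r N else Bot)"

definition sat_th :: "'a set \<Rightarrow> 'a fm set \<Rightarrow> bool" where
  "sat_th X \<Gamma> = (\<forall>F\<in>\<Gamma>. sat X F)"

definition stable_model :: "'a set \<Rightarrow> 'a fm set \<Rightarrow> bool" where
  "stable_model X \<Gamma> =
     (sat_th X (reduct X ` \<Gamma>) \<and> (\<forall>Y. Y \<subset> X \<longrightarrow> \<not> sat_th Y (reduct X ` \<Gamma>)))"

definition strongly_equiv :: "'a fm \<Rightarrow> 'a fm \<Rightarrow> bool" where
  "strongly_equiv F G =
     (\<forall>\<Gamma> X. stable_model X (insert F \<Gamma>) = stable_model X (insert G \<Gamma>))"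

definition weights :: "('a fm \<times> real) list \<Rightarrow> nat list \<Rightarrow> real multiset" where
  "weights ps I = mset (map (\<lambda>i. snd (ps ! i)) I)"

definition agg_monotone ::
  "(real multiset \<Rightarrow> ereal) \<Rightarrow> ('a fm \<times> real) list \<Rightarrow> (ereal \<Rightarrow> ereal \<Rightarrow> bool) \<Rightarrow> real \<Rightarrow> bool" where
  "agg_monotone op ps r N =
     (\<forall>W1 W2. W1 \<subseteq># W2 \<longrightarrow> W2 \<subseteq># mset (map snd ps) \<longrightarrow> r (op W1) (ereal N) \<longrightarrow> r (op W2) (ereal N))"

definition agg_antimonotone ::
  "(real multiset \<Rightarrow> ereal) \<Rightarrow> ('a fm \<times> real) list \<Rightarrow> (ereal \<Rightarrow> ereal \<Rightarrow> bool) \<Rightarrow> real \<Rightarrow> bool" where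
  "agg_antimonotone op ps r N =
     (\<forall>W1 W2. W2 \<subseteq># W1 \<longrightarrow> W1 \<subseteq># mset (map snd ps) \<longrightarrow> r (op W1) (ereal N) \<longrightarrow> r (op W2) (ereal N))"

text \<open>Subsets of {0..<n} are enumerated as the (strictly increasing) index lists
  in subseqs [0..<n].\<close>

definition index_subsets :: "nat \<Rightarrow> nat list list" where
  "index_subsets n = subseqs [0..<n]"

definition pdb_tr ::
  "(real multiset \<Rightarrow> ereal) \<Rightarrow> ('a fm \<times> real) list \<Rightarrow> (ereal \<Rightarrow> ereal \<Rightarrow> bool) \<Rightarrow> real \<Rightarrow> 'a fm" where
  "pdb_tr op ps r N =
     (let n = length ps in
      BigOr [ Conj (BigAnd (map (\<lambda>i. fst (ps ! i)) I1))
                   (BigAnd (map (\<lambda>i. Neg (fst (ps ! i))) (filter (\<lambda>i. i \<notin> set I2) [0..<n])))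
            . I1 \<leftarrow> index_subsets n, I2 \<leftarrow> index_subsets n,
              set I1 \<subseteq> set I2 \<and>
              (\<forall>I \<in> set (index_subsets n). set I1 \<subseteq> set I \<and> set I \<subseteq> set I2 \<longrightarrow>
                 r (op (weights ps I)) (ereal N)) ])"

definition agg_impl_form ::
  "(real multiset \<Rightarrow> ereal) \<Rightarrow> ('a fm \<times> real) list \<Rightarrow> (ereal \<Rightarrow> ereal \<Rightarrow> bool) \<Rightarrow> real \<Rightarrow> 'a fm" where
  "agg_impl_form op ps r N =
     (let n = length ps in
      BigAnd [ Imp (BigAnd (map (\<lambda>i. fst (ps ! i)) I))
                   (BigOr (map (\<lambda>i. fst (ps ! i)) (filter (\<lambda>i. i \<notin> set I) [0..<n])))
             . I \<leftarrow> index_subsets n, \<not> r (op (weights ps I)) (ereal N) ])"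

end

theory Submission
  imports Defs
begin

text \<open>
  Two formulas are strongly equivalent as soon as their reducts with respect to any X
  are satisfied by the same subsets Y of X.  For Y \<subseteq> X, let T_Y \<subseteq> T_X be the sets of
  indices i whose atom F_i is true in Y resp. X, and let Q(S) say that the aggregate
  condition holds on the weights indexed by S.  We compute both reducts:
    Y satisfies the reduct of the translation  iff  Q(S) for every T_Y \<subseteq> S \<subseteq> T_X;
    Y satisfies the reduct of the implications iff  Q(T_Y) and Q(T_X).
  Since Q is monotone or antimonotone on index sets, a condition on the whole interval
  [T_Y, T_X] reduces to its two endpoints, so both reducts agree.
\<close>

lemma sat_reduct_imp_sat: "Y \<subseteq> X \<Longrightarrow> sat Y (reduct X F) \<Longrightarrow> sat X F"
  by (cases F) (auto split: if_splits)

lemma sat_reduct_Conj: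
  "Y \<subseteq> X \<Longrightarrow> sat Y (reduct X (Conj F G)) = (sat Y (reduct X F) \<and> sat Y (reduct X G))"
  using sat_reduct_imp_sat[of Y X F] sat_reduct_imp_sat[of Y X G] by auto

lemma sat_reduct_Disj:
  "Y \<subseteq> X \<Longrightarrow> sat Y (reduct X (Disj F G)) = (sat Y (reduct X F) \<or> sat Y (reduct X G))"
  using sat_reduct_imp_sat[of Y X F] sat_reduct_imp_sat[of Y X G] by auto

lemma sat_reduct_BigAnd:
  "Y \<subseteq> X \<Longrightarrow> sat Y (reduct X (BigAnd Fs)) = (\<forall>F\<in>set Fs. sat Y (reduct X F))"
  by (induction Fs) (simp_all del: reduct.simps add: BigAnd_def Top_def sat_reduct_Conj reduct.simps(2,5))

lemma sat_reduct_BigOr: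
  "Y \<subseteq> X \<Longrightarrow> sat Y (reduct X (BigOr Fs)) = (\<exists>F\<in>set Fs. sat Y (reduct X F))"
  by (induction Fs) (simp_all del: reduct.simps add: BigOr_def sat_reduct_Disj reduct.simps(2))

lemma sat_reduct_Neg: "Y \<subseteq> X \<Longrightarrow> sat Y (reduct X (Neg F)) = (\<not> sat X F)"
  using sat_reduct_imp_sat[of Y X F] by (auto simp: Neg_def)

lemma sat_BigAnd: "sat X (BigAnd Fs) = (\<forall>F\<in>set Fs. sat X F)"
  by (induction Fs) (simp_all add: BigAnd_def Top_def)

lemma sat_BigOr: "sat X (BigOr Fs) = (\<exists>F\<in>set Fs. sat X F)"
  by (induction Fs) (simp_all add: BigOr_def)

lemma strongly_equiv_if_reducts_agree:
  assumes "\<And>X Y. Y \<subseteq> X \<Longrightarrow> sat Y (reduct X F) = sat Y (reduct X G)"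
  shows "strongly_equiv F G"
  unfolding strongly_equiv_def stable_model_def sat_th_def
  using assms by (auto dest: psubset_imp_subset)

lemma set_index_subsets: "set ` set (index_subsets n) = Pow {..<n}"
  unfolding index_subsets_def subseqs_powset by (simp add: lessThan_atLeast0)

lemma distinct_index_subsets: "I \<in> set (index_subsets n) \<Longrightarrow> distinct I"
  unfolding index_subsets_def using subseqs_distinctD[of I "[0..<n]"] by simp

lemma index_subset_bound: "I \<in> set (index_subsets n) \<Longrightarrow> set I \<subseteq> {..<n}"
  using set_index_subsets[of n] by blast

lemma index_subsets_cover: "S \<subseteq> {..<n} \<Longrightarrow> \<exists>I\<in>set (index_subsets n). set I = S"
  using set_index_subsets[of n] by (metis Pow_iff imageE)

definition agg_holds ::
  "(real multiset \<Rightarrow> ereal) \<Rightarrow> ('a fm \<times> real) list \<Rightarrow> (ereal \<Rightarrow> ereal \<Rightarrow> bool) \<Rightarrow> real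
   \<Rightarrow> nat set \<Rightarrow> bool" where
  "agg_holds op ps prec N S = prec (op (image_mset (\<lambda>i. snd (ps ! i)) (mset_set S))) (ereal N)"

lemma agg_holds_weights:
  "I \<in> set (index_subsets n) \<Longrightarrow>
   prec (op (weights ps I)) (ereal N) = agg_holds op ps prec N (set I)"
  using distinct_index_subsets[of I n]
  by (simp add: weights_def agg_holds_def mset_map mset_set_set)

lemma weights_submultisets:
  assumes "S1 \<subseteq> S2" "S2 \<subseteq> {..<length ps}"
  shows "image_mset (\<lambda>i. snd (ps ! i)) (mset_set S1) \<subseteq># image_mset (\<lambda>i. snd (ps ! i)) (mset_set S2)"
    and "image_mset (\<lambda>i. snd (ps ! i)) (mset_set S2) \<subseteq># mset (map snd ps)"
proof -
  have "finite S2" using assms(2) finite_subset by blast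
  then show "image_mset (\<lambda>i. snd (ps ! i)) (mset_set S1) \<subseteq># image_mset (\<lambda>i. snd (ps ! i)) (mset_set S2)"
    using assms(1) by (intro image_mset_subseteq_mono subset_imp_msubset_mset_set) auto
  have "mset (map snd ps) = image_mset (\<lambda>i. snd (ps ! i)) (mset_set {..<length ps})"
  proof -
    have "map snd ps = map (\<lambda>i. snd (ps ! i)) [0..<length ps]"
      by (rule nth_equalityI) auto
    then show ?thesis
      by (simp only: mset_map mset_upt lessThan_atLeast0)
  qed
  then show "image_mset (\<lambda>i. snd (ps ! i)) (mset_set S2) \<subseteq># mset (map snd ps)"
    using assms(2) by (metis image_mset_subseteq_mono subset_imp_msubset_mset_set finite_lessThan)
qed

lemma agg_holds_mono:
  assumes "agg_monotone op ps prec N" "S1 \<subseteq> S2" "S2 \<subseteq> {..<length ps}"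
    and "agg_holds op ps prec N S1"
  shows "agg_holds op ps prec N S2"
  using assms weights_submultisets[OF assms(2,3)]
  unfolding agg_monotone_def agg_holds_def by blast

lemma agg_holds_antimono:
  assumes "agg_antimonotone op ps prec N" "S1 \<subseteq> S2" "S2 \<subseteq> {..<length ps}"
    and "agg_holds op ps prec N S2"
  shows "agg_holds op ps prec N S1"
  using assms weights_submultisets[OF assms(2,3)]
  unfolding agg_antimonotone_def agg_holds_def by blast

lemma interval_iff_endpoints:
  fixes A B :: "'b::order"
  assumes "A \<le> B"
    and "(\<forall>x y. A \<le> x \<longrightarrow> x \<le> y \<longrightarrow> y \<le> B \<longrightarrow> Q x \<longrightarrow> Q y) \<or>
         (\<forall>x y. A \<le> x \<longrightarrow> x \<le> y \<longrightarrow> y \<le> B \<longrightarrow> Q y \<longrightarrow> Q x)"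
  shows "(\<forall>x. A \<le> x \<and> x \<le> B \<longrightarrow> Q x) \<longleftrightarrow> Q A \<and> Q B"
  using assms by (meson order_refl)

definition true_indices :: "('a fm \<times> real) list \<Rightarrow> 'a set \<Rightarrow> nat set" where
  "true_indices ps X = {i. i < length ps \<and> sat X (fst (ps ! i))}"

lemma true_indices_bound: "true_indices ps X \<subseteq> {..<length ps}"
  by (auto simp: true_indices_def)

lemma sat_reduct_element:
  assumes atoms: "\<forall>p \<in> set ps. \<exists>a. fst p = Atom a" and "Y \<subseteq> X" "i < length ps"
  shows "sat Y (reduct X (fst (ps ! i))) = (i \<in> true_indices ps Y)"
proof -
  obtain a where "fst (ps ! i) = Atom a"
    using atoms nth_mem[OF assms(3)] by blast
  then show ?thesis
    using assms by (auto simp: true_indices_def)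
qed

lemma true_indices_mono:
  assumes atoms: "\<forall>p \<in> set ps. \<exists>a. fst p = Atom a" and "Y \<subseteq> X"
  shows "true_indices ps Y \<subseteq> true_indices ps X"
  using assms nth_mem by (fastforce simp: true_indices_def)

lemma sat_reduct_pdb_disjunct:
  assumes atoms: "\<forall>p \<in> set ps. \<exists>a. fst p = Atom a" and YX: "Y \<subseteq> X"
    and I1: "set I1 \<subseteq> {..<length ps}"
  shows "sat Y (reduct X (Conj (BigAnd (map (\<lambda>i. fst (ps ! i)) I1))
           (BigAnd (map (\<lambda>i. Neg (fst (ps ! i))) (filter (\<lambda>i. i \<notin> set I2) [0..<length ps])))))
         \<longleftrightarrow> set I1 \<subseteq> true_indices ps Y \<and> true_indices ps X \<subseteq> set I2"
proof -
  have "sat Y (reduct X (BigAnd (map (\<lambda>i. fst (ps ! i)) I1))) \<longleftrightarrow> set I1 \<subseteq> true_indices ps Y"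
    using I1 sat_reduct_element[OF atoms YX] by (auto simp: sat_reduct_BigAnd[OF YX])
  moreover have "sat Y (reduct X (BigAnd (map (\<lambda>i. Neg (fst (ps ! i)))
      (filter (\<lambda>i. i \<notin> set I2) [0..<length ps])))) \<longleftrightarrow> true_indices ps X \<subseteq> set I2"
    by (auto simp: sat_reduct_BigAnd[OF YX] sat_reduct_Neg[OF YX] true_indices_def)
  ultimately show ?thesis
    by (simp del: reduct.simps add: sat_reduct_Conj[OF YX])
qed

lemma sat_reduct_pdb_tr:
  assumes atoms: "\<forall>p \<in> set ps. \<exists>a. fst p = Atom a" and YX: "Y \<subseteq> X"
  shows "sat Y (reduct X (pdb_tr op ps prec N)) \<longleftrightarrow>
    (\<forall>S. true_indices ps Y \<subseteq> S \<and> S \<subseteq> true_indices ps X \<longrightarrow> agg_holds op ps prec N S)"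
    (is "_ \<longleftrightarrow> (\<forall>S. ?TY \<subseteq> S \<and> S \<subseteq> ?TX \<longrightarrow> ?Q S)")
proof -
  let ?n = "length ps"
  let ?D = "\<lambda>I1 I2. Conj (BigAnd (map (\<lambda>i. fst (ps ! i)) I1))
    (BigAnd (map (\<lambda>i. Neg (fst (ps ! i))) (filter (\<lambda>i. i \<notin> set I2) [0..<?n])))"
  let ?Window = "\<lambda>I1 I2. set I1 \<subseteq> set I2 \<and>
    (\<forall>I\<in>set (index_subsets ?n). set I1 \<subseteq> set I \<and> set I \<subseteq> set I2 \<longrightarrow> ?Q (set I)) \<and>
    set I1 \<subseteq> ?TY \<and> ?TX \<subseteq> set I2"
  have "sat Y (reduct X (pdb_tr op ps prec N)) \<longleftrightarrow>
    (\<exists>I1\<in>set (index_subsets ?n). \<exists>I2\<in>set (index_subsets ?n). set I1 \<subseteq> set I2 \<and>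
       (\<forall>I\<in>set (index_subsets ?n). set I1 \<subseteq> set I \<and> set I \<subseteq> set I2 \<longrightarrow>
          prec (op (weights ps I)) (ereal N)) \<and>
       sat Y (reduct X (?D I1 I2)))"
    unfolding pdb_tr_def Let_def sat_reduct_BigOr[OF YX]
    by (auto simp del: reduct.simps split: if_splits)
  also have "\<dots> \<longleftrightarrow> (\<exists>I1\<in>set (index_subsets ?n). \<exists>I2\<in>set (index_subsets ?n). ?Window I1 I2)"
    by (simp del: reduct.simps add: sat_reduct_pdb_disjunct[OF atoms YX index_subset_bound]
        agg_holds_weights cong: bex_cong ball_cong)
  also have "\<dots> \<longleftrightarrow> (\<forall>S. ?TY \<subseteq> S \<and> S \<subseteq> ?TX \<longrightarrow> ?Q S)"
  proof
    assume "\<exists>I1\<in>set (index_subsets ?n). \<exists>I2\<in>set (index_subsets ?n). ?Window I1 I2"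
    then obtain I1 I2 where
      window: "\<forall>I\<in>set (index_subsets ?n). set I1 \<subseteq> set I \<and> set I \<subseteq> set I2 \<longrightarrow> ?Q (set I)"
      and "set I1 \<subseteq> ?TY" "?TX \<subseteq> set I2"
      by blast
    show "\<forall>S. ?TY \<subseteq> S \<and> S \<subseteq> ?TX \<longrightarrow> ?Q S"
    proof (intro allI impI)
      fix S assume S: "?TY \<subseteq> S \<and> S \<subseteq> ?TX"
      then have "S \<subseteq> {..<?n}"
        using true_indices_bound[of ps X] by blast
      then obtain I where "I \<in> set (index_subsets ?n)" and "set I = S"
        using index_subsets_cover by blast
      moreover have "set I1 \<subseteq> set I \<and> set I \<subseteq> set I2"
        using S \<open>set I = S\<close> \<open>set I1 \<subseteq> ?TY\<close> \<open>?TX \<subseteq> set I2\<close> by auto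
      ultimately show "?Q S"
        using window by auto
    qed
  next
    assume between: "\<forall>S. ?TY \<subseteq> S \<and> S \<subseteq> ?TX \<longrightarrow> ?Q S"
    obtain I1 I2 where I1: "I1 \<in> set (index_subsets ?n)" "set I1 = ?TY"
      and I2: "I2 \<in> set (index_subsets ?n)" "set I2 = ?TX"
      using index_subsets_cover[OF true_indices_bound] by metis
    have "?Window I1 I2"
      using between I1(2) I2(2) true_indices_mono[OF atoms YX] by simp
    then show "\<exists>I1\<in>set (index_subsets ?n). \<exists>I2\<in>set (index_subsets ?n). ?Window I1 I2"
      using I1(1) I2(1) by blast
  qed
  finally show ?thesis .
qed

lemma sat_reduct_impl_conjunct:
  assumes atoms: "\<forall>p \<in> set ps. \<exists>a. fst p = Atom a" and YX: "Y \<subseteq> X"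
    and I: "set I \<subseteq> {..<length ps}"
  shows "sat Y (reduct X (Imp (BigAnd (map (\<lambda>i. fst (ps ! i)) I))
           (BigOr (map (\<lambda>i. fst (ps ! i)) (filter (\<lambda>i. i \<notin> set I) [0..<length ps])))))
         \<longleftrightarrow> set I \<noteq> true_indices ps X \<and> set I \<noteq> true_indices ps Y"
proof -
  have "\<And>Z. (sat Z (BigAnd (map (\<lambda>i. fst (ps ! i)) I)) \<longrightarrow>
      sat Z (BigOr (map (\<lambda>i. fst (ps ! i)) (filter (\<lambda>i. i \<notin> set I) [0..<length ps]))))
    \<longleftrightarrow> set I \<noteq> true_indices ps Z"
    using I by (auto simp: sat_BigAnd sat_BigOr true_indices_def)
  moreover have "sat Y (reduct X (BigAnd (map (\<lambda>i. fst (ps ! i)) I))) =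
      sat Y (BigAnd (map (\<lambda>i. fst (ps ! i)) I))"
    and "sat Y (reduct X (BigOr (map (\<lambda>i. fst (ps ! i)) (filter (\<lambda>i. i \<notin> set I) [0..<length ps])))) =
      sat Y (BigOr (map (\<lambda>i. fst (ps ! i)) (filter (\<lambda>i. i \<notin> set I) [0..<length ps])))"
    using I sat_reduct_element[OF atoms YX]
    by (auto simp: sat_reduct_BigAnd[OF YX] sat_reduct_BigOr[OF YX] sat_BigAnd sat_BigOr
        true_indices_def)
  ultimately show ?thesis
    by (simp del: reduct.simps add: reduct.simps(5))
qed

lemma sat_reduct_agg_impl_form:
  assumes atoms: "\<forall>p \<in> set ps. \<exists>a. fst p = Atom a" and YX: "Y \<subseteq> X"
  shows "sat Y (reduct X (agg_impl_form op ps prec N)) \<longleftrightarrow>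
    agg_holds op ps prec N (true_indices ps Y) \<and> agg_holds op ps prec N (true_indices ps X)"
proof -
  let ?n = "length ps" and ?Q = "agg_holds op ps prec N"
  let ?C = "\<lambda>I. Imp (BigAnd (map (\<lambda>i. fst (ps ! i)) I))
    (BigOr (map (\<lambda>i. fst (ps ! i)) (filter (\<lambda>i. i \<notin> set I) [0..<?n])))"
  have "sat Y (reduct X (agg_impl_form op ps prec N)) \<longleftrightarrow>
    (\<forall>I\<in>set (index_subsets ?n). \<not> prec (op (weights ps I)) (ereal N) \<longrightarrow>
       sat Y (reduct X (?C I)))"
    unfolding agg_impl_form_def Let_def sat_reduct_BigAnd[OF YX]
    by (auto simp del: reduct.simps split: if_splits)
  also have "\<dots> \<longleftrightarrow> (\<forall>I\<in>set (index_subsets ?n). \<not> ?Q (set I) \<longrightarrow>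
       set I \<noteq> true_indices ps X \<and> set I \<noteq> true_indices ps Y)"
    by (simp del: reduct.simps add: sat_reduct_impl_conjunct[OF atoms YX index_subset_bound]
        agg_holds_weights cong: ball_cong)
  also have "\<dots> \<longleftrightarrow> ?Q (true_indices ps Y) \<and> ?Q (true_indices ps X)"
  proof
    assume "\<forall>I\<in>set (index_subsets ?n). \<not> ?Q (set I) \<longrightarrow>
       set I \<noteq> true_indices ps X \<and> set I \<noteq> true_indices ps Y"
    moreover obtain IY IX where "IY \<in> set (index_subsets ?n)" "set IY = true_indices ps Y"
      and "IX \<in> set (index_subsets ?n)" "set IX = true_indices ps X"
      using index_subsets_cover[OF true_indices_bound] by metis
    ultimately show "?Q (true_indices ps Y) \<and> ?Q (true_indices ps X)"
      by metis
  qed auto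
  finally show ?thesis .
qed

theorem proposition18:
  fixes op :: "real multiset \<Rightarrow> ereal"
    and ps :: "('a fm \<times> real) list"
    and prec :: "ereal \<Rightarrow> ereal \<Rightarrow> bool"
    and N :: real
  assumes atoms: "\<forall>p \<in> set ps. \<exists>a. fst p = Atom a"
    and mono: "agg_monotone op ps prec N \<or> agg_antimonotone op ps prec N"
  shows "strongly_equiv (pdb_tr op ps prec N) (agg_impl_form op ps prec N)"
proof (rule strongly_equiv_if_reducts_agree)
  fix X Y :: "'a set"
  assume YX: "Y \<subseteq> X"
  let ?TY = "true_indices ps Y" and ?TX = "true_indices ps X" and ?Q = "agg_holds op ps prec N"
  have interval: "?TY \<subseteq> ?TX" "?TX \<subseteq> {..<length ps}"
    using true_indices_mono[OF atoms YX] true_indices_bound .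
  have "(\<forall>S1 S2. ?TY \<subseteq> S1 \<longrightarrow> S1 \<subseteq> S2 \<longrightarrow> S2 \<subseteq> ?TX \<longrightarrow> ?Q S1 \<longrightarrow> ?Q S2) \<or>
        (\<forall>S1 S2. ?TY \<subseteq> S1 \<longrightarrow> S1 \<subseteq> S2 \<longrightarrow> S2 \<subseteq> ?TX \<longrightarrow> ?Q S2 \<longrightarrow> ?Q S1)"
    using mono agg_holds_mono[of op ps prec N] agg_holds_antimono[of op ps prec N] interval(2)
    by (meson subset_trans)
  then have "(\<forall>S. ?TY \<subseteq> S \<and> S \<subseteq> ?TX \<longrightarrow> ?Q S) \<longleftrightarrow> ?Q ?TY \<and> ?Q ?TX"
    by (rule interval_iff_endpoints[OF interval(1)])
  then show "sat Y (reduct X (pdb_tr op ps prec N)) = sat Y (reduct X (agg_impl_form op ps prec N))"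
    unfolding sat_reduct_pdb_tr[OF atoms YX] sat_reduct_agg_impl_form[OF atoms YX] .
qed

end
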